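(* Let $p$ be an odd prime, let $a,c$ be positive integers such that $c$ is a primitive divisor of $p^a-1$, and let $b=2^t$ with $t\ge 2$. Then $bc$ is a primitive divisor of $p^{ab}-1$ if and only if $p^a\equiv 1\pmod 4$ and $\tfrac{p^a-1}{c}$ is odd.
   Context: An integer $e$ is a primitive divisor of $p^m-1$ if $e\mid p^m-1$ and $e\nmid p^s-1$ for every $1\le s<m$. *)

theory Defs
  imports "HOL-Computational_Algebra.Primes"
begin

definition primitive_divisor :: "nat \<Rightarrow> nat \<Rightarrow> nat \<Rightarrow> bool" where
  "primitive_divisor e p m \<longleftrightarrow>
     e dvd (p ^ m - 1) \<and> (\<forall>s. 1 \<le> s \<and> s < m \<longrightarrow> \<not> e dvd (p ^ s - 1))"

end

theory Submission
  imports Defs "HOL-Number_Theory.Number_Theory"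
begin

text \<open>
  Put \<open>q = p^a\<close> and \<open>q - 1 = c d\<close>. Since \<open>c\<close> is primitive, \<open>c\<close> divides \<open>p^s - 1\<close> only when
  \<open>a\<close> divides \<open>s\<close>, and then \<open>p^s - 1 = c d (1 + q + \<dots> + q^(k-1))\<close> with \<open>s = a k\<close>.
  For \<open>q \<equiv> 1 (mod 4)\<close> the 2-adic valuation of \<open>1 + q + \<dots> + q^(k-1)\<close> is that of \<open>k\<close>, so if
  moreover \<open>d\<close> is odd then \<open>2^t c\<close> divides \<open>p^(a k) - 1\<close> exactly when \<open>2^t\<close> divides \<open>k\<close>; this
  gives primitivity. Conversely, if \<open>q \<equiv> 3 (mod 4)\<close> or \<open>d\<close> is even, then already \<open>4 c\<close>
  divides \<open>q^2 - 1\<close>, and repeated squaring shows that \<open>2^t c\<close> divides \<open>p^(a 2^(t-1)) - 1\<close>.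
\<close>

lemma power_minus_one_eq_geometric_sum:
  fixes q :: nat
  assumes "q \<ge> 1"
  shows "q ^ k - 1 = (q - 1) * (\<Sum>i<k. q ^ i)"
proof -
  have "int (q ^ k - 1) = int q ^ k - 1" using assms by (simp add: of_nat_diff)
  also have "\<dots> = (int q - 1) * (\<Sum>i<k. int q ^ i)" by (rule power_diff_1_eq)
  also have "\<dots> = int ((q - 1) * (\<Sum>i<k. q ^ i))" using assms by (simp add: of_nat_diff)
  finally show ?thesis by linarith
qed

lemma geometric_sum_double:
  fixes q :: nat
  shows "(\<Sum>i<m + m. q ^ i) = (\<Sum>i<m. q ^ i) * (1 + q ^ m)"
proof -
  have ivl: "{..<m + m} = {..<m} \<union> {m..<m + m}" by auto
  have "(\<Sum>i<m + m. q ^ i) = (\<Sum>i<m. q ^ i) + (\<Sum>i\<in>{m..<m + m}. q ^ i)"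
    unfolding ivl by (rule sum.union_disjoint) auto
  also have "(\<Sum>i\<in>{m..<m + m}. q ^ i) = (\<Sum>i\<in>{0..<m}. q ^ (i + m))"
    using sum.shift_bounds_nat_ivl[of "\<lambda>i. q ^ i" 0 m m] by simp
  also have "\<dots> = q ^ m * (\<Sum>i<m. q ^ i)"
    by (simp add: power_add sum_distrib_left atLeast0LessThan mult.commute)
  finally show ?thesis by (simp add: algebra_simps)
qed

lemma even_geometric_sum_iff:
  fixes q :: nat
  assumes "odd q"
  shows "even (\<Sum>i<k. q ^ i) \<longleftrightarrow> even k"
  using assms by (induction k) auto

text \<open>The case \<open>p = 2\<close> of lifting the exponent: for \<open>q \<equiv> 1 (mod 4)\<close> each doubling of \<open>k\<close>
  multiplies the sum by \<open>1 + q^m \<equiv> 2 (mod 4)\<close>, which contributes exactly one factor \<open>2\<close>.\<close>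
lemma two_pow_dvd_geometric_sum_imp_dvd:
  fixes q :: nat
  assumes "q mod 4 = 1" and "2 ^ t dvd (\<Sum>i<k. q ^ i)"
  shows "2 ^ t dvd k"
  using assms(2)
proof (induction t arbitrary: k)
  case 0
  then show ?case by simp
next
  case (Suc t)
  have "odd q" using assms(1) by presburger
  have "even (\<Sum>i<k. q ^ i)" using Suc.prems by (rule dvd_trans[rotated]) simp
  then have "even k" using even_geometric_sum_iff[OF \<open>odd q\<close>] by simp
  then obtain m where k: "k = m + m" by (metis evenE mult_2)
  have "q ^ m mod 4 = (q mod 4) ^ m mod 4" by (rule power_mod[symmetric])
  with assms(1) have "q ^ m mod 4 = 1" by simp
  define r where "r = 2 * ((1 + q ^ m) div 4) + 1"
  have r: "1 + q ^ m = 2 * r" and "odd r"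
    using \<open>q ^ m mod 4 = 1\<close> unfolding r_def by presburger+
  have "2 * 2 ^ t dvd 2 * ((\<Sum>i<m. q ^ i) * r)"
    using Suc.prems unfolding k geometric_sum_double r by (simp add: ac_simps)
  then have "2 ^ t dvd (\<Sum>i<m. q ^ i) * r" by simp
  with \<open>odd r\<close> have "2 ^ t dvd (\<Sum>i<m. q ^ i)" by (simp add: coprime_dvd_mult_left_iff)
  then have "2 ^ t dvd m" by (rule Suc.IH)
  then show ?case unfolding k by (simp add: mult_2[symmetric])
qed

lemma two_pow_mult_dvd_power_two_pow:
  fixes q :: nat
  assumes "odd q"
  shows "2 ^ t * (q - 1) dvd q ^ 2 ^ t - 1"
proof (induction t)
  case 0
  then show ?case by simp
next
  case (Suc t)
  let ?x = "q ^ 2 ^ t"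
  have "y * y - 1 = (y - 1) * (y + 1)" for y :: nat by (cases y) (auto simp: algebra_simps)
  then have "q ^ 2 ^ Suc t - 1 = (?x - 1) * (?x + 1)"
    by (metis power2_eq_square power_Suc2 power_mult)
  moreover have "2 ^ t * (q - 1) * 2 dvd (?x - 1) * (?x + 1)"
    using Suc.IH assms by (intro mult_dvd_mono) simp_all
  ultimately show ?case by (simp add: ac_simps)
qed

lemma primitive_divisor_dvd_exponent:
  assumes "primitive_divisor c p a" and "a > 0" and "p > 0"
    and "c dvd p ^ s - 1"
  shows "a dvd s"
proof -
  have "[p ^ a = 1] (mod c)"
    using assms(1,3) by (simp add: primitive_divisor_def cong_altdef_nat)
  then have "ord c p dvd a" by (simp add: ord_divides')
  with \<open>a > 0\<close> have "0 < ord c p" "ord c p \<le> a" by (auto intro: dvd_imp_le Nat.gr0I)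
  moreover have "c dvd p ^ ord c p - 1"
    using \<open>p > 0\<close> ord_divides[of p "ord c p" c] by (simp add: cong_altdef_nat)
  ultimately have "ord c p = a"
    using assms(1) unfolding primitive_divisor_def by (metis One_nat_def Suc_leI le_neq_implies_less)
  moreover have "[p ^ s = 1] (mod c)" using assms(3,4) by (simp add: cong_altdef_nat)
  ultimately show ?thesis by (simp add: ord_divides')
qed

lemma two_pow_mult_dvd_power_two_pow_pred:
  fixes q c t :: nat
  assumes "odd q" and "c dvd q - 1" and "t \<ge> 2"
    and "\<not> (q mod 4 = 1 \<and> odd ((q - 1) div c))"
  shows "2 ^ t * c dvd q ^ 2 ^ (t - 1) - 1"
proof -
  define d where "d = (q - 1) div c"
  have qcd: "q - 1 = c * d" using assms(2) unfolding d_def by simp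
  have "4 dvd d * (q + 1)"
  proof (cases "q mod 4 = 1")
    case True
    then have "even d" using assms(4) unfolding d_def by simp
    moreover have "even (q + 1)" using assms(1) by simp
    ultimately show ?thesis by (metis mult_dvd_mono numeral_Bit0_eq_double)
  next
    case False
    with assms(1) have "4 dvd q + 1" by presburger
    then show ?thesis by (rule dvd_mult)
  qed
  moreover have "q ^ 2 - 1 = c * (d * (q + 1))"
    using assms(1) qcd by (cases q) (auto simp: power2_eq_square algebra_simps)
  ultimately have "4 * c dvd q ^ 2 - 1" by (simp add: mult.commute mult_dvd_mono)
  have "t = (t - 2) + 2" using assms(3) by simp
  then have "(2::nat) ^ t = 2 ^ (t - 2) * 2 ^ 2" by (metis power_add)
  then have "2 ^ t * c = 2 ^ (t - 2) * (4 * c)" by simp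
  also have "\<dots> dvd 2 ^ (t - 2) * (q ^ 2 - 1)" using \<open>4 * c dvd q ^ 2 - 1\<close> by simp
  also have "\<dots> dvd (q ^ 2) ^ 2 ^ (t - 2) - 1"
    using assms(1) by (intro two_pow_mult_dvd_power_two_pow) simp
  also have "(q ^ 2) ^ 2 ^ (t - 2) = q ^ 2 ^ (t - 1)"
    using assms(3) by (simp flip: power_mult power_Suc add: Suc_diff_Suc numeral_2_eq_2)
  finally show ?thesis .
qed

lemma two_pow_mult_dvd_power_minus_one_imp_dvd:
  fixes q c t k :: nat
  assumes "q mod 4 = 1" and "c dvd q - 1" and "odd ((q - 1) div c)"
    and "2 ^ t * c dvd q ^ k - 1"
  shows "2 ^ t dvd k"
proof -
  define d where "d = (q - 1) div c"
  have "c \<noteq> 0" using assms(3) by (rule contrapos_nn) simp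
  have "q \<ge> 1" using assms(1) by presburger
  then have "q ^ k - 1 = (q - 1) * (\<Sum>i<k. q ^ i)" by (rule power_minus_one_eq_geometric_sum)
  also have "q - 1 = c * d" using assms(2) unfolding d_def by simp
  finally have "q ^ k - 1 = c * (d * (\<Sum>i<k. q ^ i))" by (simp only: mult.assoc)
  with assms(4) \<open>c \<noteq> 0\<close> have "2 ^ t dvd d * (\<Sum>i<k. q ^ i)"
    by (simp add: mult.commute[of "2 ^ t"])
  moreover have "coprime (2 ^ t) d" using assms(3) unfolding d_def by simp
  ultimately have "2 ^ t dvd (\<Sum>i<k. q ^ i)" by (simp add: coprime_dvd_mult_right_iff)
  with assms(1) show ?thesis by (rule two_pow_dvd_geometric_sum_imp_dvd)
qed

lemma primitive_divisor_two_pow_mult_imp: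
  fixes p a c t :: nat
  assumes "odd p" and "a > 0" and "c dvd p ^ a - 1" and "t \<ge> 2"
    and "primitive_divisor (2 ^ t * c) p (a * 2 ^ t)"
  shows "p ^ a mod 4 = 1 \<and> odd ((p ^ a - 1) div c)"
proof (rule ccontr)
  assume "\<not> (p ^ a mod 4 = 1 \<and> odd ((p ^ a - 1) div c))"
  with assms(1,3,4) have "2 ^ t * c dvd (p ^ a) ^ 2 ^ (t - 1) - 1"
    by (intro two_pow_mult_dvd_power_two_pow_pred) simp_all
  then have "2 ^ t * c dvd p ^ (a * 2 ^ (t - 1)) - 1" by (simp add: power_mult)
  moreover have "1 \<le> a * 2 ^ (t - 1)" and "a * 2 ^ (t - 1) < a * 2 ^ t"
    using assms(2,4) by (simp_all add: power_strict_increasing)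
  ultimately show False
    using assms(5) unfolding primitive_divisor_def by blast
qed

lemma primitive_divisor_two_pow_multI:
  fixes p a c t :: nat
  assumes "primitive_divisor c p a" and "odd p" and "a > 0"
    and "p ^ a mod 4 = 1" and "odd ((p ^ a - 1) div c)"
  shows "primitive_divisor (2 ^ t * c) p (a * 2 ^ t)"
  unfolding primitive_divisor_def
proof (intro conjI allI impI notI)
  have "c dvd p ^ a - 1" using assms(1) by (simp add: primitive_divisor_def)
  then have "2 ^ t * c dvd 2 ^ t * (p ^ a - 1)" by simp
  also have "\<dots> dvd (p ^ a) ^ 2 ^ t - 1"
    using assms(2) by (intro two_pow_mult_dvd_power_two_pow) simp
  finally show "2 ^ t * c dvd p ^ (a * 2 ^ t) - 1" by (simp add: power_mult)
next
  fix s
  assume s: "1 \<le> s \<and> s < a * 2 ^ t" and dvd: "2 ^ t * c dvd p ^ s - 1"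
  have "p > 0" using assms(2) by (rule odd_pos)
  have "a dvd s"
    using assms(1,3) \<open>p > 0\<close> dvd_mult_right[OF dvd] by (rule primitive_divisor_dvd_exponent)
  then obtain k where k: "s = a * k" ..
  have "2 ^ t dvd k"
  proof (rule two_pow_mult_dvd_power_minus_one_imp_dvd)
    show "p ^ a mod 4 = 1" by (fact assms(4))
    show "odd ((p ^ a - 1) div c)" by (fact assms(5))
    show "c dvd p ^ a - 1" using assms(1) by (simp add: primitive_divisor_def)
    show "2 ^ t * c dvd (p ^ a) ^ k - 1" using dvd by (simp add: k power_mult)
  qed
  moreover have "0 < k" "k < 2 ^ t" using s k by (auto intro: Nat.gr0I)
  ultimately show False by (simp add: nat_dvd_not_less)
qed

theorem mainTheorem13:
  fixes p a c b t :: nat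
  assumes "prime p" and "odd p"
    and "a > 0" and "c > 0"
    and "primitive_divisor c p a"
    and "b = 2 ^ t" and "t \<ge> 2"
  shows "primitive_divisor (b * c) p (a * b) \<longleftrightarrow>
           (p ^ a mod 4 = 1 \<and> odd ((p ^ a - 1) div c))"
proof -
  have "c dvd p ^ a - 1" using assms(5) by (simp add: primitive_divisor_def)
  then show ?thesis
    unfolding assms(6)
    using primitive_divisor_two_pow_mult_imp[OF assms(2,3) _ assms(7)]
      primitive_divisor_two_pow_multI[OF assms(5,2,3)]
    by blast
qed

end
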